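(* Let $S\subseteq[r]$. For $i\in\{1,\dots,r\}$, let $N(i)$ be the number of permutations $a_1a_2\cdots a_{r+1}$ of $1,\dots,r+1$ with descent set $S$ in which $r+1$ appears before $i$. Then $N(i)$ does not depend on $i$.
   Context: The descent set of a permutation $a_1a_2\cdots a_{r+1}$ is $\{j\in[r]: a_j>a_{j+1}\}$. *)

theory Defs
  imports "HOL-Combinatorics.Multiset_Permutations"
begin

text \<open>Descent set of a permutation a_1 ... a_(r+1), given as a list xs (xs ! k = a_(k+1)):
  the set of j in {1..r} (r+1 = length xs) with a_j > a_(j+1).\<close>
definition descent_set :: "nat list \<Rightarrow> nat set" where
  "descent_set xs = {j \<in> {1..length xs - 1}. xs ! (j - 1) > xs ! j}"

definition N_count :: "nat \<Rightarrow> nat set \<Rightarrow> nat \<Rightarrow> nat" where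
  "N_count r S i = card {xs \<in> permutations_of_set {1..r+1}.
      descent_set xs = S \<and> (\<exists>p q. p < q \<and> q < length xs \<and> xs ! p = r + 1 \<and> xs ! q = i)}"

end

theory Submission
  imports Defs
begin

text \<open>For \<open>1 \<le> i < r\<close> consider the involution on permutations that exchanges the values \<open>i\<close> and
  \<open>i + 1\<close> when they are not in adjacent positions and does nothing when they are. Exchanging two
  consecutive values changes only the comparison between these two values, which is never a
  comparison of neighbours in the non-adjacent case; so the descent set is preserved. In the
  non-adjacent case the exchange turns "\<open>r + 1\<close> before \<open>i\<close>" into "\<open>r + 1\<close> before \<open>i + 1\<close>", and in
  the adjacent case \<open>r + 1\<close> precedes \<open>i\<close> if and only if it precedes \<open>i + 1\<close>.\<close>

definition occurs_before :: "'a list \<Rightarrow> 'a \<Rightarrow> 'a \<Rightarrow> bool" where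
  "occurs_before xs c a \<longleftrightarrow> (\<exists>p q. p < q \<and> q < length xs \<and> xs ! p = c \<and> xs ! q = a)"

definition adjacent_in :: "'a list \<Rightarrow> 'a \<Rightarrow> 'a \<Rightarrow> bool" where
  "adjacent_in xs a b \<longleftrightarrow> (\<exists>k. Suc k < length xs \<and>
     (xs ! k = a \<and> xs ! Suc k = b \<or> xs ! k = b \<and> xs ! Suc k = a))"

definition swap_unless_adjacent :: "'a \<Rightarrow> 'a \<Rightarrow> 'a list \<Rightarrow> 'a list" where
  "swap_unless_adjacent a b xs =
     (if adjacent_in xs a b then xs else map (Transposition.transpose a b) xs)"

lemma N_count_eq_card_occurs_before:
  "N_count r S i = card {xs \<in> permutations_of_set {1..r+1}.
     descent_set xs = S \<and> occurs_before xs (r + 1) i}"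
  by (simp add: N_count_def occurs_before_def)

lemma card_eq_if_involution:
  assumes "\<And>x. f (f x) = x" and "\<And>x. f x \<in> A \<longleftrightarrow> x \<in> B"
  shows "card A = card B"
proof -
  have "A = f ` B"
  proof
    show "A \<subseteq> f ` B"
      by (metis assms image_eqI subsetI)
    show "f ` B \<subseteq> A"
      using assms by auto
  qed
  moreover have "inj f"
    using assms(1) by (rule inj_on_inverseI)
  ultimately show ?thesis
    by (simp add: card_image inj_on_subset)
qed

lemma adjacent_in_map_transpose:
  "adjacent_in (map (Transposition.transpose a b) xs) a b \<longleftrightarrow> adjacent_in xs a b"
  unfolding adjacent_in_def by (auto simp: transpose_eq_iff)

lemma swap_unless_adjacent_involutory [simp]:
  "swap_unless_adjacent a b (swap_unless_adjacent a b xs) = xs"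
  by (simp add: swap_unless_adjacent_def adjacent_in_map_transpose)

lemma swap_unless_adjacent_in_permutations_of_set_iff:
  assumes "a \<in> A" and "b \<in> A"
  shows "swap_unless_adjacent a b xs \<in> permutations_of_set A \<longleftrightarrow> xs \<in> permutations_of_set A"
proof -
  have "map (Transposition.transpose a b) ys \<in> permutations_of_set A"
    if "ys \<in> permutations_of_set A" for ys
    using that assms by (auto simp: permutations_of_set_def distinct_map)
  then show ?thesis
    by (metis swap_unless_adjacent_def swap_unless_adjacent_involutory)
qed

lemma transpose_Suc_less_iff:
  assumes "\<not> (x = a \<and> y = Suc a)" and "\<not> (x = Suc a \<and> y = a)"
  shows "Transposition.transpose a (Suc a) x < Transposition.transpose a (Suc a) y \<longleftrightarrow> x < y"
  using assms by (auto simp: transpose_def)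

lemma descent_set_swap_unless_adjacent_Suc:
  assumes "distinct xs"
  shows "descent_set (swap_unless_adjacent a (Suc a) xs) = descent_set xs"
proof (cases "adjacent_in xs a (Suc a)")
  case False
  have "Transposition.transpose a (Suc a) (xs ! j) < Transposition.transpose a (Suc a) (xs ! (j - 1))
          \<longleftrightarrow> xs ! j < xs ! (j - 1)"
    if "j \<in> {1..length xs - 1}" for j
  proof (rule transpose_Suc_less_iff)
    from that have "Suc (j - 1) < length xs" and "Suc (j - 1) = j"
      by auto
    with False show "\<not> (xs ! j = a \<and> xs ! (j - 1) = Suc a)"
      and "\<not> (xs ! j = Suc a \<and> xs ! (j - 1) = a)"
      unfolding adjacent_in_def by metis+
  qed
  with False show ?thesis
    by (auto simp: swap_unless_adjacent_def descent_set_def)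
qed (simp add: swap_unless_adjacent_def)

lemma occurs_before_map_inj:
  assumes "inj f"
  shows "occurs_before (map f xs) (f c) (f a) \<longleftrightarrow> occurs_before xs c a"
proof -
  have "map f xs ! p = f v \<longleftrightarrow> xs ! p = v" if "p < length xs" for p v
    using that assms by (simp add: inj_eq)
  then show ?thesis
    unfolding occurs_before_def by (metis length_map order.strict_trans)
qed

lemma occurs_before_nth_iff:
  assumes "distinct xs" and "q < length xs"
  shows "occurs_before xs c (xs ! q) \<longleftrightarrow> (\<exists>p<q. xs ! p = c)"
  using assms by (auto simp: occurs_before_def nth_eq_iff_index_eq)

lemma occurs_before_consecutive:
  assumes "distinct xs" and "Suc k < length xs" and "c \<noteq> xs ! k"
  shows "occurs_before xs c (xs ! Suc k) \<longleftrightarrow> occurs_before xs c (xs ! k)"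
  using assms by (auto simp: occurs_before_nth_iff less_Suc_eq)

lemma occurs_before_adjacent:
  assumes "distinct xs" and "adjacent_in xs a b" and "c \<noteq> a" and "c \<noteq> b"
  shows "occurs_before xs c a \<longleftrightarrow> occurs_before xs c b"
  using assms occurs_before_consecutive[OF assms(1)] unfolding adjacent_in_def by metis

lemma occurs_before_swap_unless_adjacent:
  assumes "distinct xs" and "c \<noteq> a" and "c \<noteq> b"
  shows "occurs_before (swap_unless_adjacent a b xs) c a \<longleftrightarrow> occurs_before xs c b"
proof (cases "adjacent_in xs a b")
  case True
  then show ?thesis
    using assms occurs_before_adjacent by (simp add: swap_unless_adjacent_def)
next
  case False
  then show ?thesis
    using assms occurs_before_map_inj[OF inj_transpose, of a b xs c b]
    by (simp add: swap_unless_adjacent_def)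
qed

lemma N_count_Suc:
  assumes "1 \<le> i" and "Suc i \<le> r"
  shows "N_count r S i = N_count r S (Suc i)"
proof -
  let ?A = "\<lambda>v. {xs \<in> permutations_of_set {1..r+1}.
    descent_set xs = S \<and> occurs_before xs (r + 1) v}"
  have range: "i \<in> {1..r+1}" "Suc i \<in> {1..r+1}" "r + 1 \<noteq> i" "r + 1 \<noteq> Suc i"
    using assms by auto
  have "swap_unless_adjacent i (Suc i) xs \<in> ?A i \<longleftrightarrow> xs \<in> ?A (Suc i)" for xs
  proof (cases "xs \<in> permutations_of_set {1..r+1}")
    case True
    then have "distinct xs"
      by (rule permutations_of_setD)
    with True range show ?thesis
      by (simp add: swap_unless_adjacent_in_permutations_of_set_iff
          descent_set_swap_unless_adjacent_Suc occurs_before_swap_unless_adjacent)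
  next
    case False
    with range show ?thesis
      by (simp add: swap_unless_adjacent_in_permutations_of_set_iff)
  qed
  then show ?thesis
    unfolding N_count_eq_card_occurs_before
    by (rule card_eq_if_involution[OF swap_unless_adjacent_involutory])
qed

lemma N_count_eq_if_le:
  assumes "1 \<le> i" and "i \<le> j" and "j \<le> r"
  shows "N_count r S i = N_count r S j"
  using assms(2,3)
proof (induction j rule: dec_induct)
  case (step n)
  then have "N_count r S i = N_count r S n"
    by simp
  also have "\<dots> = N_count r S (Suc n)"
    using assms(1) step by (intro N_count_Suc) auto
  finally show ?case .
qed simp

theorem lemma3p4:
  fixes r :: nat and S :: "nat set"
  assumes "S \<subseteq> {1..r}"
    and "i \<in> {1..r}" and "j \<in> {1..r}"
  shows "N_count r S i = N_count r S j"
proof (cases "i \<le> j")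
  case True
  with assms show ?thesis
    by (simp add: N_count_eq_if_le)
next
  case False
  with assms show ?thesis
    by (simp add: N_count_eq_if_le[of j i])
qed

end
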